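(* Let $\mathbf{S}$ be $\mathbf{G3CoPC}$ or $\mathbf{G3MPC}$, let $p$ be a propositional variable and let $n\ge 1$ be a natural number. Then both sequents $\Rightarrow \neg^{(2n+1)}p\to\neg p$ and $\Rightarrow \neg^{(2n)}p\leftrightarrow\neg\neg p$ are derivable in $\mathbf{S}$, where $\neg^{(m)}$ denotes $m$ nested applications of $\neg$.
   Context: Formulas are generated from a countable set of propositional variables $p,q,\dots$ and the constant $\top$ by the grammar $\varphi::= p\mid\top\mid\varphi\wedge\varphi\mid\varphi\vee\varphi\mid\varphi\to\varphi\mid\neg\varphi$ (there is no constant $\bot$). $\varphi\leftrightarrow\psi$ abbreviates $(\varphi\to\psi)\wedge(\psi\to\varphi)$. A sequent is an expression $\Gamma\Rightarrow\varphi$ where $\Gamma$ is a finite multiset of formulas and $\varphi$ is a formula (the goal); $\Gamma,\Delta$ denotes multiset union and $\Gamma,\alpha$ denotes $\Gamma$ with one more occurrence of $\alpha$. Rules ($p$ a propositional variable): (ax) $\Gamma,p\Rightarrow p$ (no premises); ($\top$) $\Gamma\Rightarrow\top$ (no premises); ($\to$r) from $\Gamma,\alpha\Rightarrow\beta$ infer $\Gamma\Rightarrow\alpha\to\beta$; ($\to$l) from $\Gamma,\alpha\to\beta\Rightarrow\alpha$ and $\Gamma,\beta\Rightarrow\varphi$ infer $\Gamma,\alpha\to\beta\Rightarrow\varphi$; ($\wedge$r) from $\Gamma\Rightarrow\alpha$ and $\Gamma\Rightarrow\beta$ infer $\Gamma\Rightarrow\alpha\wedge\beta$; ($\wedge$l)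 from $\Gamma,\alpha,\beta\Rightarrow\varphi$ infer $\Gamma,\alpha\wedge\beta\Rightarrow\varphi$; ($\vee$r$_1$), ($\vee$r$_2$) from $\Gamma\Rightarrow\alpha$ (resp. $\Gamma\Rightarrow\beta$) infer $\Gamma\Rightarrow\alpha\vee\beta$; ($\vee$l) from $\Gamma,\alpha\Rightarrow\varphi$ and $\Gamma,\beta\Rightarrow\varphi$ infer $\Gamma,\alpha\vee\beta\Rightarrow\varphi$; (n) from $\Gamma,\neg\alpha,\beta\Rightarrow\alpha$ and $\Gamma,\neg\alpha,\alpha\Rightarrow\beta$ infer $\Gamma,\neg\alpha\Rightarrow\neg\beta$; (nef) from $\Gamma,\neg\alpha\Rightarrow\alpha$ infer $\Gamma,\neg\alpha\Rightarrow\neg\beta$; (copc) from $\Gamma,\neg\alpha,\beta\Rightarrow\alpha$ infer $\Gamma,\neg\alpha\Rightarrow\neg\beta$; (an) from $\Gamma,\alpha\Rightarrow\neg\alpha$ infer $\Gamma\Rightarrow\neg\alpha$. The rules (ax) through ($\vee$l) are the positive rules. The four systems are: $\mathbf{G3N}$ = positive rules + (n); $\mathbf{G3NeF}$ = positive rules + (n) + (nef); $\mathbf{G3CoPC}$ = positive rules + (copc); $\mathbf{G3MPC}$ = positive rules + (copc) + (an). None of them contains weakening, contraction or cut as a rule. A derivation is a finite tree of rule instances with leaves instances of (ax) or ($\top$); its height is the number of inference steps on a longest branch. A sequent is derivable if it has a derivation; a formula $\varphi$ is a theorem if $\Rightarrow\varphi$ (empty antecedent) is derivable. *)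

theory Defs
  imports Main "HOL-Library.Multiset"
begin

datatype fm = Var nat | Top | Conj fm fm | Disj fm fm | Imp fm fm | Neg fm

definition Iff :: "fm \<Rightarrow> fm \<Rightarrow> fm" where
  "Iff a b = Conj (Imp a b) (Imp b a)"

fun negs :: "nat \<Rightarrow> fm \<Rightarrow> fm" where
  "negs 0 a = a"
| "negs (Suc m) a = Neg (negs m a)"

datatype system = G3N | G3NeF | G3CoPC | G3MPC

definition has_n :: "system \<Rightarrow> bool" where
  "has_n S \<longleftrightarrow> S = G3N \<or> S = G3NeF"
definition has_nef :: "system \<Rightarrow> bool" where
  "has_nef S \<longleftrightarrow> S = G3NeF"
definition has_copc :: "system \<Rightarrow> bool" where
  "has_copc S \<longleftrightarrow> S = G3CoPC \<or> S = G3MPC"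
definition has_an :: "system \<Rightarrow> bool" where
  "has_an S \<longleftrightarrow> S = G3MPC"

inductive derivable :: "system \<Rightarrow> fm multiset \<Rightarrow> fm \<Rightarrow> bool" for S where
  ax: "derivable S (add_mset (Var p) \<Gamma>) (Var p)"
| top: "derivable S \<Gamma> Top"
| impR: "derivable S (add_mset a \<Gamma>) b \<Longrightarrow> derivable S \<Gamma> (Imp a b)"
| impL: "derivable S (add_mset (Imp a b) \<Gamma>) a \<Longrightarrow> derivable S (add_mset b \<Gamma>) \<phi>
          \<Longrightarrow> derivable S (add_mset (Imp a b) \<Gamma>) \<phi>"
| conjR: "derivable S \<Gamma> a \<Longrightarrow> derivable S \<Gamma> b \<Longrightarrow> derivable S \<Gamma> (Conj a b)"
| conjL: "derivable S (add_mset a (add_mset b \<Gamma>)) \<phi> \<Longrightarrow> derivable S (add_mset (Conj a b) \<Gamma>) \<phi>"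
| disjR1: "derivable S \<Gamma> a \<Longrightarrow> derivable S \<Gamma> (Disj a b)"
| disjR2: "derivable S \<Gamma> b \<Longrightarrow> derivable S \<Gamma> (Disj a b)"
| disjL: "derivable S (add_mset a \<Gamma>) \<phi> \<Longrightarrow> derivable S (add_mset b \<Gamma>) \<phi>
          \<Longrightarrow> derivable S (add_mset (Disj a b) \<Gamma>) \<phi>"
| n: "has_n S \<Longrightarrow> derivable S (add_mset (Neg a) (add_mset b \<Gamma>)) a
       \<Longrightarrow> derivable S (add_mset (Neg a) (add_mset a \<Gamma>)) b
       \<Longrightarrow> derivable S (add_mset (Neg a) \<Gamma>) (Neg b)"
| nef: "has_nef S \<Longrightarrow> derivable S (add_mset (Neg a) \<Gamma>) a
       \<Longrightarrow> derivable S (add_mset (Neg a) \<Gamma>) (Neg b)"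
| copc: "has_copc S \<Longrightarrow> derivable S (add_mset (Neg a) (add_mset b \<Gamma>)) a
       \<Longrightarrow> derivable S (add_mset (Neg a) \<Gamma>) (Neg b)"
| an: "has_an S \<Longrightarrow> derivable S (add_mset a \<Gamma>) (Neg a)
       \<Longrightarrow> derivable S \<Gamma> (Neg a)"

end

theory Submission
  imports Defs
begin

text \<open>If a formula \<open>a\<close> and an odd negation \<open>negs (2m+1) a\<close> of it both occur in the
  antecedent, then (copc) derives every negation: for \<open>m = 0\<close> its premise is an identity
  sequent, and the step from \<open>m\<close> to \<open>m + 1\<close> applies (copc) twice with principal formula
  \<open>negs (2m+3) a\<close>, which puts \<open>negs (2m+1) a\<close> into the antecedent. Each of the three
  implications then follows by one (copc) step down to such a contradictory antecedent.\<close>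

lemma negs_Neg: "negs m (Neg a) = negs (Suc m) a"
  by (induction m) auto

lemma derivable_id: "derivable S (add_mset a \<Gamma>) a"
proof (induction a arbitrary: \<Gamma>)
  case (Var p)
  show ?case by (rule derivable.ax)
next
  case Top
  show ?case by (rule derivable.top)
next
  case (Conj a b)
  have "derivable S (add_mset a (add_mset b \<Gamma>)) a" "derivable S (add_mset a (add_mset b \<Gamma>)) b"
    using Conj.IH[of "add_mset b \<Gamma>"] Conj.IH(2)[of "add_mset a \<Gamma>"]
    by (simp_all add: add_mset_commute)
  then show ?case by (intro derivable.conjL derivable.conjR)
next
  case (Disj a b)
  show ?case
    by (intro derivable.disjL derivable.disjR1 derivable.disjR2 Disj.IH)
next
  case (Imp a b)
  have "derivable S (add_mset (Imp a b) (add_mset a \<Gamma>)) a"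
    using Imp.IH(1)[of "add_mset (Imp a b) \<Gamma>"] by (simp add: add_mset_commute)
  moreover have "derivable S (add_mset b (add_mset a \<Gamma>)) b"
    by (rule Imp.IH(2))
  ultimately have "derivable S (add_mset (Imp a b) (add_mset a \<Gamma>)) b"
    by (rule derivable.impL)
  then show ?case
    by (intro derivable.impR) (simp add: add_mset_commute)
next
  case (Neg a)
  have id_a: "derivable S (add_mset (Neg a) (add_mset a \<Gamma>)) a"
    using Neg.IH[of "add_mset (Neg a) \<Gamma>"] by (simp add: add_mset_commute)
  show ?case
  proof (cases S)
    case G3N
    then show ?thesis using id_a by (intro derivable.n) (auto simp: has_n_def)
  next
    case G3NeF
    then show ?thesis using id_a by (intro derivable.n) (auto simp: has_n_def)
  next
    case G3CoPC
    then show ?thesis using id_a by (intro derivable.copc) (auto simp: has_copc_def)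
  next
    case G3MPC
    then show ?thesis using id_a by (intro derivable.copc) (auto simp: has_copc_def)
  qed
qed

lemma derivable_mem: "a \<in># \<Gamma> \<Longrightarrow> derivable S \<Gamma> a"
  by (metis derivable_id mset_add)

lemma derivable_copc_mem:
  assumes "has_copc S" and "Neg a \<in># \<Gamma>" and "derivable S (add_mset b \<Gamma>) a"
  shows "derivable S \<Gamma> (Neg b)"
proof -
  obtain \<Gamma>' where \<Gamma>: "\<Gamma> = add_mset (Neg a) \<Gamma>'"
    using assms(2) by (metis mset_add)
  have "derivable S (add_mset (Neg a) (add_mset b \<Gamma>')) a"
    using assms(3) by (simp add: \<Gamma> add_mset_commute)
  then show ?thesis
    unfolding \<Gamma> by (rule derivable.copc[OF assms(1)])
qed

lemma derivable_Neg_if_odd_negs_mem: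
  assumes "has_copc S" and "a \<in># \<Gamma>" and "negs (Suc (2*m)) a \<in># \<Gamma>"
  shows "derivable S \<Gamma> (Neg b)"
  using assms(2,3)
proof (induction m arbitrary: \<Gamma> b)
  case 0
  then show ?case
    by (intro derivable_copc_mem[OF assms(1)] derivable_mem) auto
next
  case (Suc m)
  let ?odd = "negs (Suc (2*m)) a"
  have "derivable S (add_mset ?odd (add_mset b \<Gamma>)) (Neg ?odd)"
    using Suc.prems by (intro Suc.IH) auto
  then have "derivable S (add_mset b \<Gamma>) (Neg ?odd)"
    using Suc.prems(2) by (intro derivable_copc_mem[OF assms(1)]) auto
  then show ?case
    using Suc.prems(2) by (intro derivable_copc_mem[OF assms(1)]) auto
qed

lemma derivable_even_negs_if_odd_negs_mem:
  assumes "has_copc S" and "a \<in># \<Gamma>" and "negs (Suc (2*m)) a \<in># \<Gamma>"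
  shows "derivable S \<Gamma> (negs (2*m) a)"
proof (cases m)
  case 0
  then show ?thesis using assms(2) by (simp add: derivable_mem)
next
  case (Suc k)
  then show ?thesis
    using derivable_Neg_if_odd_negs_mem[OF assms] by simp
qed

lemma derivable_odd_negs_imp_Neg:
  assumes "has_copc S"
  shows "derivable S {#} (Imp (negs (2*n+1) a) (Neg a))"
proof -
  have "derivable S {#a, negs (2*n+1) a#} (negs (2*n) a)"
    by (rule derivable_even_negs_if_odd_negs_mem[OF assms]) auto
  then have "derivable S {#negs (2*n+1) a#} (Neg a)"
    by (intro derivable_copc_mem[OF assms]) (auto simp: add_mset_commute)
  then show ?thesis
    by (intro derivable.impR) simp
qed

lemma derivable_even_negs_imp_Neg_Neg:
  assumes "has_copc S"
  shows "derivable S {#} (Imp (negs (2 * Suc k) a) (Neg (Neg a)))"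
proof -
  have "negs (2 * Suc k) a = negs (Suc (2*k)) (Neg a)"
    by (simp add: negs_Neg)
  then have "derivable S {#Neg a, negs (2 * Suc k) a#} (negs (2*k) (Neg a))"
    by (intro derivable_even_negs_if_odd_negs_mem[OF assms]) auto
  then have "derivable S {#negs (2 * Suc k) a#} (Neg (Neg a))"
    by (intro derivable_copc_mem[OF assms]) (auto simp: negs_Neg add_mset_commute)
  then show ?thesis
    by (intro derivable.impR) simp
qed

lemma derivable_Neg_Neg_imp_even_negs:
  assumes "has_copc S"
  shows "derivable S {#} (Imp (Neg (Neg a)) (negs (2 * Suc k) a))"
proof -
  have "derivable S {#a, negs (Suc (2*k)) a, Neg (Neg a)#} (negs (2*k) a)"
    by (rule derivable_even_negs_if_odd_negs_mem[OF assms]) auto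
  then have "derivable S {#negs (Suc (2*k)) a, Neg (Neg a)#} (Neg a)"
    by (intro derivable_copc_mem[OF assms]) auto
  then have "derivable S {#Neg (Neg a)#} (Neg (negs (Suc (2*k)) a))"
    by (intro derivable_copc_mem[OF assms]) (auto simp: add_mset_commute)
  then show ?thesis
    by (intro derivable.impR) simp
qed

theorem proposition4p2:
  fixes S :: system and p :: nat and n :: nat
  assumes "S = G3CoPC \<or> S = G3MPC"
    and "n \<ge> 1"
  shows "derivable S {#} (Imp (negs (2*n+1) (Var p)) (Neg (Var p)))
       \<and> derivable S {#} (Iff (negs (2*n) (Var p)) (Neg (Neg (Var p))))"
proof -
  have copc: "has_copc S"
    using assms(1) by (auto simp: has_copc_def)
  obtain k where n: "n = Suc k"
    using assms(2) by (cases n) auto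
  show ?thesis
    unfolding Iff_def n
    using derivable_odd_negs_imp_Neg[OF copc, of "Suc k"]
      derivable_even_negs_imp_Neg_Neg[OF copc] derivable_Neg_Neg_imp_even_negs[OF copc]
    by (blast intro: derivable.conjR)
qed

end
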